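(* Let $\Gamma,\Delta,\Pi,\Sigma$ be finite multisets of $\mathcal{L}_{A_m}^{\Box}$-formulas such that the sequent $\Gamma,\Pi\Rightarrow\Sigma,\Delta$ is $\mathsf{K(A)}$-valid and no variable occurs both in a formula of $\Gamma\uplus\Delta$ and in a formula of $\Pi\uplus\Sigma$. Then $\Gamma\Rightarrow\Delta$ and $\Pi\Rightarrow\Sigma$ are both $\mathsf{K(A)}$-valid.
   Context: $\mathcal{L}_{A_m}^{\Box}$-formulas are built from a countably infinite set $\mathrm{Var}$ of variables using binary $\to$ and unary $\Box$. Fix $p_0\in\mathrm{Var}$; $\overline{0}:=p_0\to p_0$, $\neg\varphi:=\varphi\to\overline{0}$, $\varphi\&\psi:=\neg\varphi\to\psi$. A $\mathsf{K(A)}$-model $\langle W,R,V\rangle$: nonempty $W$, $R\subseteq W\times W$, $V\colon\mathrm{Var}\times W\to[-r,r]$ for some real $r\ge0$, extended by $V(\varphi\to\psi,x)=V(\psi,x)-V(\varphi,x)$, $V(\Box\varphi,x)=\inf_{\mathbb{R}}\{V(\varphi,y):Rxy\}$ (empty infimum $=0$). A formula is $\mathsf{K(A)}$-valid if its value is $\ge0$ at every world of every model. A sequent $\Gamma\Rightarrow\Delta$ is an ordered pair of finite multisets of formulas; it is $\mathsf{K(A)}$-valid if $\mathcal{I}(\Gamma\Rightarrow\Delta)$ is, where $\mathcal{I}(\varphi_1,\dots,\varphi_n\Rightarrow\psi_1,\dots,\psi_m):=(\varphi_1\&\dots\&\varphi_n)\to(\psi_1\&\dots\&\psi_m)$, empty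 $\&$-combination $=\overline{0}$ (equivalently: $\sum_i V(\varphi_i,x)\le\sum_j V(\psi_j,x)$ everywhere). *)

theory Defs
  imports Complex_Main "HOL-Library.Multiset"
begin

datatype fm = Var nat | Imp fm fm | Box fm

fun vars :: "fm \<Rightarrow> nat set" where
  "vars (Var p) = {p}"
| "vars (Imp a b) = vars a \<union> vars b"
| "vars (Box a) = vars a"

fun val :: "('w \<Rightarrow> 'w \<Rightarrow> bool) \<Rightarrow> (nat \<Rightarrow> 'w \<Rightarrow> real) \<Rightarrow> fm \<Rightarrow> 'w \<Rightarrow> real" where
  "val R V (Var p) x = V p x"
| "val R V (Imp a b) x = val R V b x - val R V a x"
| "val R V (Box a) x =
     (if {y. R x y} = {} then 0 else Inf ((\<lambda>y. val R V a y) ` {y. R x y}))"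

definition KA_model :: "('w \<Rightarrow> 'w \<Rightarrow> bool) \<Rightarrow> (nat \<Rightarrow> 'w \<Rightarrow> real) \<Rightarrow> bool" where
  "KA_model R V \<longleftrightarrow> (\<exists>r\<ge>0. \<forall>p x. \<bar>V p x\<bar> \<le> r)"

definition KA_valid_seq :: "'w itself \<Rightarrow> fm multiset \<Rightarrow> fm multiset \<Rightarrow> bool" where
  "KA_valid_seq (_ :: 'w itself) \<Gamma> \<Delta> \<longleftrightarrow>
     (\<forall>(R :: 'w \<Rightarrow> 'w \<Rightarrow> bool) V x. KA_model R V \<longrightarrow>
        (\<Sum>\<phi>\<in>#\<Gamma>. val R V \<phi> x) \<le> (\<Sum>\<psi>\<in>#\<Delta>. val R V \<psi> x))"

definition mvars :: "fm multiset \<Rightarrow> nat set" where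
  "mvars M = (\<Union>\<phi>\<in>set_mset M. vars \<phi>)"

end

theory Submission
  imports Defs
begin

text \<open>Evaluating a valid sequent under the valuation that agrees with a given one on the
  variables of \<open>\<Gamma> + \<Delta>\<close> and is \<open>0\<close> elsewhere kills every formula of \<open>\<Pi> + \<Sigma>\<close>, because the
  value of a formula whose variables are all \<open>0\<close> is \<open>0\<close> (the infimum of zeros is \<open>0\<close>, and so
  is the empty infimum). What remains is the validity of \<open>\<Gamma> \<Rightarrow> \<Delta>\<close> at the original
  valuation; the other half is symmetric.\<close>

lemma val_cong:
  assumes "\<And>p w. p \<in> vars \<phi> \<Longrightarrow> V p w = V' p w"
  shows "val R V \<phi> w = val R V' \<phi> w"
  using assms
proof (induction \<phi> arbitrary: w)
  case (Box a)
  then have "(\<lambda>y. val R V a y) = (\<lambda>y. val R V' a y)" by auto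
  then show ?case by (simp only: val.simps)
qed auto

lemma val_eq_0:
  assumes "\<And>p w. p \<in> vars \<phi> \<Longrightarrow> V p w = 0"
  shows "val R V \<phi> w = 0"
  using assms
proof (induction \<phi> arbitrary: w)
  case (Box a)
  then have "(\<lambda>y. val R V a y) ` {y. R w y} \<subseteq> {0}" by auto
  then show ?case by (cases "{y. R w y} = {}") (auto simp: subset_singleton_iff)
qed auto

lemma mvars_add [simp]: "mvars (M + N) = mvars M \<union> mvars N"
  unfolding mvars_def by auto

lemma vars_subset_mvars: "\<phi> \<in># M \<Longrightarrow> vars \<phi> \<subseteq> mvars M"
  unfolding mvars_def by auto

definition restrict_val :: "nat set \<Rightarrow> (nat \<Rightarrow> 'w \<Rightarrow> real) \<Rightarrow> nat \<Rightarrow> 'w \<Rightarrow> real" where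
  "restrict_val S V = (\<lambda>p w. if p \<in> S then V p w else 0)"

lemma KA_model_restrict_val:
  assumes "KA_model R V"
  shows "KA_model R (restrict_val S V)"
proof -
  obtain r where "r \<ge> 0" "\<forall>p x. \<bar>V p x\<bar> \<le> r"
    using assms unfolding KA_model_def by blast
  then show ?thesis unfolding KA_model_def restrict_val_def by auto
qed

lemma sum_val_restrict_val:
  assumes "mvars M \<subseteq> S"
  shows "(\<Sum>\<phi>\<in>#M. val R (restrict_val S V) \<phi> x) = (\<Sum>\<phi>\<in>#M. val R V \<phi> x)"
proof (rule arg_cong[where f = sum_mset], rule image_mset_cong)
  fix \<phi> assume "\<phi> \<in># M"
  then have "vars \<phi> \<subseteq> S" using assms vars_subset_mvars by blast
  then show "val R (restrict_val S V) \<phi> x = val R V \<phi> x"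
    by (intro val_cong) (auto simp: restrict_val_def)
qed

lemma sum_val_restrict_val_disjoint:
  assumes "mvars M \<inter> S = {}"
  shows "(\<Sum>\<phi>\<in>#M. val R (restrict_val S V) \<phi> x) = 0"
proof -
  have "image_mset (\<lambda>\<phi>. val R (restrict_val S V) \<phi> x) M = image_mset (\<lambda>_. 0) M"
  proof (rule image_mset_cong)
    fix \<phi> assume "\<phi> \<in># M"
    then have "vars \<phi> \<inter> S = {}" using assms vars_subset_mvars by blast
    then show "val R (restrict_val S V) \<phi> x = 0"
      by (intro val_eq_0) (auto simp: restrict_val_def)
  qed
  then show ?thesis by simp
qed

lemma KA_valid_seq_drop_disjoint:
  assumes valid: "KA_valid_seq TYPE('w) (\<Gamma> + \<Pi>) (\<Sigma> + \<Delta>)"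
    and disjoint: "mvars (\<Gamma> + \<Delta>) \<inter> mvars (\<Pi> + \<Sigma>) = {}"
  shows "KA_valid_seq TYPE('w) \<Gamma> \<Delta>"
  unfolding KA_valid_seq_def
proof (intro allI impI)
  fix R :: "'w \<Rightarrow> 'w \<Rightarrow> bool" and V x
  assume "KA_model R V"
  define V' where "V' = restrict_val (mvars (\<Gamma> + \<Delta>)) V"
  have "(\<Sum>\<phi>\<in>#\<Gamma> + \<Pi>. val R V' \<phi> x) \<le> (\<Sum>\<psi>\<in>#\<Sigma> + \<Delta>. val R V' \<psi> x)"
    using valid KA_model_restrict_val[OF \<open>KA_model R V\<close>]
    unfolding KA_valid_seq_def V'_def by blast
  moreover have "(\<Sum>\<phi>\<in>#\<Pi>. val R V' \<phi> x) = 0" "(\<Sum>\<phi>\<in>#\<Sigma>. val R V' \<phi> x) = 0"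
    using disjoint unfolding V'_def by (auto intro!: sum_val_restrict_val_disjoint)
  moreover have "(\<Sum>\<phi>\<in>#\<Gamma>. val R V' \<phi> x) = (\<Sum>\<phi>\<in>#\<Gamma>. val R V \<phi> x)"
    "(\<Sum>\<phi>\<in>#\<Delta>. val R V' \<phi> x) = (\<Sum>\<phi>\<in>#\<Delta>. val R V \<phi> x)"
    unfolding V'_def by (auto intro!: sum_val_restrict_val)
  ultimately show "(\<Sum>\<phi>\<in>#\<Gamma>. val R V \<phi> x) \<le> (\<Sum>\<psi>\<in>#\<Delta>. val R V \<psi> x)"
    by simp
qed

theorem lemma4p7:
  fixes \<Gamma> \<Delta> \<Pi> \<Sigma> :: "fm multiset"
  assumes "KA_valid_seq TYPE('w) (\<Gamma> + \<Pi>) (\<Sigma> + \<Delta>)"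
    and "mvars (\<Gamma> + \<Delta>) \<inter> mvars (\<Pi> + \<Sigma>) = {}"
  shows "KA_valid_seq TYPE('w) \<Gamma> \<Delta> \<and> KA_valid_seq TYPE('w) \<Pi> \<Sigma>"
proof
  show "KA_valid_seq TYPE('w) \<Gamma> \<Delta>"
    using assms by (rule KA_valid_seq_drop_disjoint)
  have "KA_valid_seq TYPE('w) (\<Pi> + \<Gamma>) (\<Delta> + \<Sigma>)"
    using assms(1) by (simp add: add.commute)
  moreover have "mvars (\<Pi> + \<Sigma>) \<inter> mvars (\<Gamma> + \<Delta>) = {}"
    using assms(2) by blast
  ultimately show "KA_valid_seq TYPE('w) \<Pi> \<Sigma>"
    by (rule KA_valid_seq_drop_disjoint)
qed

end
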